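(* Let $x,\tilde x\in(-1,0)$ and $y\in(x,-x)$. Set $\Delta t=p_{1,-1}(\tilde x)-p_{1,-1}(x)$ and $\Delta\theta=p_{0,-1}(\tilde x)-p_{0,-1}(x)$. Then $$p_{\tilde x,-\tilde x}\Big(p_{\tilde x,1}^{-1}\big(p_{x,1}(y)+\Delta\theta\big)\Big)-p_{x,-x}(y)=\Delta t.$$
   Context: For real $p\neq q$ and $w$ strictly between $p$ and $q$ (oriented interval $(p,q)$, $p>q$ allowed), $p_{p,q}(w)=\ln\frac{w-p}{q-w}$, a bijection onto $\mathbb{R}$ with inverse $p_{p,q}^{-1}$. *)

theory Defs
  imports Complex_Main
begin

definition between :: "real \<Rightarrow> real \<Rightarrow> real set" where
  "between p q = {w. min p q < w \<and> w < max p q}"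

text \<open>p_{p,q}(w) = ln((w - p)/(q - w)), meant for w strictly between p and q.\<close>
definition pmap :: "real \<Rightarrow> real \<Rightarrow> real \<Rightarrow> real" where
  "pmap p q w = ln ((w - p) / (q - w))"

definition pinv :: "real \<Rightarrow> real \<Rightarrow> real \<Rightarrow> real" where
  "pinv p q = the_inv_into (between p q) (pmap p q)"

end

theory Submission
  imports Defs
begin

text \<open>Exponentiating turns each \<open>p\<^sub>p\<^sub>,\<^sub>q(w)\<close> into the ratio \<open>(w - p)/(q - w)\<close>, so the
  claim becomes a multiplicative identity between such ratios. The point
  \<open>u = p\<^sub>x\<^sub>t\<^sub>,\<^sub>1\<^sup>-\<^sup>1(\<dots>)\<close> is determined by an equation linear in \<open>u\<close>; solving it,
  \<open>(u - xt)/(-xt - u)\<close> factors into the ratios belonging to \<open>y\<close>, \<open>xt\<close> and \<open>x\<close>, and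
  \<open>-xt - u\<close> has the sign of \<open>-(x + y)\<close>, so \<open>y < -x\<close> is exactly what puts \<open>u\<close> between
  \<open>xt\<close> and \<open>-xt\<close>.\<close>

lemma between_iff: "w \<in> between p q \<longleftrightarrow> (p < w \<and> w < q) \<or> (q < w \<and> w < p)"
  by (auto simp: between_def min_def max_def)

lemma pmap_ratio_pos: "w \<in> between p q \<Longrightarrow> (w - p) / (q - w) > 0"
  by (auto simp: between_iff divide_neg_neg)

lemma exp_pmap: "w \<in> between p q \<Longrightarrow> exp (pmap p q w) = (w - p) / (q - w)"
  by (simp add: pmap_def pmap_ratio_pos)

lemma inj_on_pmap:
  assumes "p \<noteq> q" shows "inj_on (pmap p q) (between p q)"
proof
  fix u v assume u: "u \<in> between p q" and v: "v \<in> between p q"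
    and "pmap p q u = pmap p q v"
  then have "(u - p) / (q - u) = (v - p) / (q - v)"
    by (metis exp_pmap)
  moreover have "q - u \<noteq> 0" "q - v \<noteq> 0"
    using u v by (auto simp: between_iff)
  ultimately have "(u - v) * (q - p) = 0"
    by (simp add: field_simps)
  then show "u = v" using assms by simp
qed

lemma bij_betw_pmap:
  assumes "p \<noteq> q" shows "bij_betw (pmap p q) (between p q) UNIV"
proof -
  have "s \<in> pmap p q ` between p q" for s
  proof -
    define w where "w = (p + q * exp s) / (1 + exp s)"
    have den: "1 + exp s > 0" by (simp add: add_pos_pos)
    have wp: "w - p = (q - p) * exp s / (1 + exp s)" and qw: "q - w = (q - p) / (1 + exp s)"
      unfolding w_def using den by (simp_all add: field_simps)
    have "w \<in> between p q"
    proof (cases "p < q")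
      case True
      then have "0 < w - p" "0 < q - w" unfolding wp qw using den by simp_all
      then show ?thesis by (simp add: between_iff)
    next
      case False
      with assms have "q - p < 0" by simp
      then have "w - p < 0" "q - w < 0" unfolding wp qw using den
        by (simp_all add: mult_neg_pos divide_neg_pos)
      then show ?thesis by (simp add: between_iff)
    qed
    moreover have "pmap p q w = s"
      using assms den by (simp add: pmap_def wp qw)
    ultimately show ?thesis by (metis image_eqI)
  qed
  then show ?thesis using inj_on_pmap[OF assms] by (auto simp: bij_betw_def)
qed

lemma pinv_in_between:
  assumes "p \<noteq> q" shows "pinv p q s \<in> between p q"
  using bij_betw_pmap[OF assms] unfolding pinv_def bij_betw_def
  by (auto intro: the_inv_into_into)

lemma pmap_pinv:
  assumes "p \<noteq> q" shows "pmap p q (pinv p q s) = s"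
  using bij_betw_pmap[OF assms] unfolding pinv_def bij_betw_def
  by (auto intro: f_the_inv_into_f)

lemma shifted_point_ratio:
  fixes x t y u :: real
  assumes x: "-1 < x" "x < 0" and t: "-1 < t" "t < 0" and y: "x < y" "y < -x"
    and u: "u < 1"
    and shift: "(u - t) / (1 - u) = (y - x) / (1 - y) * (t / (-1 - t)) / (x / (-1 - x))"
  shows "u < -t"
    and "(u - t) / (-t - u) = (y - x) / (-x - y) * ((t - 1) / (-1 - t)) / ((x - 1) / (-1 - x))"
proof -
  define D where "D = (1 - y) * x * (1 + t)"
  define N where "N = (y - x) * t * (1 + x)"
  have "D < 0" "N < 0"
    using x t y by (simp_all add: D_def N_def mult_pos_neg mult_neg_pos mult_neg_neg)
  have "(y - x) / (1 - y) * (t / (-1 - t)) / (x / (-1 - x)) = N / D"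
  proof -
    have "1 - y \<noteq> 0" "-1 - t \<noteq> 0" "x \<noteq> 0" "-1 - x \<noteq> 0" "1 + t \<noteq> 0"
      using x t y by auto
    with \<open>D < 0\<close> show ?thesis
      by (simp add: eq_divide_eq) (simp add: D_def N_def field_simps)
  qed
  with shift have "(u - t) / (1 - u) = N / D" by simp
  then have cross: "(u - t) * D = (1 - u) * N"
    using u \<open>D < 0\<close> by (simp add: frac_eq_eq)
  have num: "(u - t) * (D + N) = (1 - t) * N"
    using cross by (simp add: algebra_simps)
  have den: "(-t - u) * (D + N) = -(1 + t) * t * (x + y) * (1 - x)"
    using cross by (simp add: D_def N_def algebra_simps)
  have "D + N < 0" using \<open>D < 0\<close> \<open>N < 0\<close> by simp
  have "-(1 + t) * t * (x + y) * (1 - x) < 0"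
    using x t y by (simp add: mult_pos_neg mult_neg_pos mult_neg_neg)
  with den have "(-t - u) * (D + N) < 0" by simp
  with \<open>D + N < 0\<close> show "u < -t" by (simp add: mult_less_0_iff)
  have "(u - t) / (-t - u) = ((u - t) * (D + N)) / ((-t - u) * (D + N))"
    using \<open>D + N < 0\<close> by simp
  also have "\<dots> = (1 - t) * N / (-(1 + t) * t * (x + y) * (1 - x))"
    by (simp only: num den)
  also have "\<dots> = (y - x) / (-x - y) * ((t - 1) / (-1 - t)) / ((x - 1) / (-1 - x))"
  proof -
    have "t \<noteq> 0" "1 + t \<noteq> 0" "x + y \<noteq> 0" "1 - x \<noteq> 0" "-x - y \<noteq> 0"
      "-1 - t \<noteq> 0" "x - 1 \<noteq> 0" "-1 - x \<noteq> 0"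
      using x t y by auto
    then show ?thesis by (simp add: N_def divide_simps) (simp add: algebra_simps)
  qed
  finally show "(u - t) / (-t - u) = (y - x) / (-x - y) * ((t - 1) / (-1 - t)) / ((x - 1) / (-1 - x))" .
qed

theorem proposition2p4:
  fixes x xt y :: real
  assumes "x \<in> {-1<..<0}" and "xt \<in> {-1<..<0}" and "y \<in> {x<..<-x}"
  shows "pmap xt (-xt) (pinv xt 1 (pmap x 1 y + (pmap 0 (-1) xt - pmap 0 (-1) x)))
           - pmap x (-x) y = pmap 1 (-1) xt - pmap 1 (-1) x"
proof -
  from assms have x: "-1 < x" "x < 0" and xt: "-1 < xt" "xt < 0" and y: "x < y" "y < -x"
    by auto
  define s where "s = pmap x 1 y + (pmap 0 (-1) xt - pmap 0 (-1) x)"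
  define u where "u = pinv xt 1 s"
  have u: "u \<in> between xt 1"
    using xt by (simp add: u_def pinv_in_between)
  have "(u - xt) / (1 - u) = exp s"
    using exp_pmap[OF u] xt by (simp add: u_def pmap_pinv)
  also have "\<dots> = (y - x) / (1 - y) * (xt / (-1 - xt)) / (x / (-1 - x))"
    using x xt y by (simp add: s_def exp_add exp_diff exp_pmap between_iff)
  finally have shift: "(u - xt) / (1 - u) = \<dots>" .
  have "u < 1" using u xt by (auto simp: between_iff)
  note ratio = shifted_point_ratio[OF x xt y this shift]
  have "exp (pmap xt (-xt) u - pmap x (-x) y) = exp (pmap 1 (-1) xt - pmap 1 (-1) x)"
    using ratio x xt y u by (simp add: exp_diff exp_pmap between_iff)
  then show ?thesis by (simp add: s_def u_def)
qed

end
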